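(* For all $f,g\in\mathrm{Mult}[[B]]$, $$f\boxtimes g=g\circ(f\boxtimes_1 g),\qquad g\,\underline{\boxtimes}\,f=f\circ\big((f\boxtimes_2 g)\cdot I\big).$$
   Context: $B$ is a unital algebra over a field $\mathbb K$ of characteristic zero. $\mathrm{Mult}[[B]]$: sequences $f=(f_n)_{n\ge0}$ of multilinear maps $f_n:B^n\to B$. Product $(f\cdot g)_n(x_1,\dots,x_n)=\sum_{k=0}^n f_k(x_1,\dots,x_k)g_{n-k}(x_{k+1},\dots,x_n)$; for $g_0=0$, composition $(f\circ g)_n(x_1,\dots,x_n)=\sum_{l\ge0}\sum_{k_1+\dots+k_l=n,k_i\ge1}f_l(g_{k_1}(x_1,\dots,x_{k_1}),\dots,g_{k_l}(x_{n-k_l+1},\dots,x_n))$; $I=(\delta_{n,1}\mathrm{id}_B)$. Planar binary trees: $Y_0=\{|\}$, $Y_n=\{\sigma\vee\tau:\sigma\in Y_k,\tau\in Y_l,k+l=n-1\}$ ($\sigma\vee\tau$: root with left subtree $\sigma$, right subtree $\tau$); each $\tau\in Y_n$, $n\ge1$, is uniquely $\tau_1\vee(\tau_2\vee(\cdots\vee(\tau_k\vee|)))$; $j_i=|\tau_1|+\dots+|\tau_i|+i$. For $f,g\in\mathrm{Mult}[[B]]$: $(f\cup g)_|=1$, $(f\cup g)_\tau(x_1,\dots,x_n)=g_k((g\cup f)_{\tau_1}(x_1,\dots,x_{j_1-1})x_{j_1},\dots,(g\cup f)_{\tau_k}(x_{j_{k-1}+1},\dots,x_{j_k-1})x_{j_k})$.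 $R:Y\to Y$: $R(|)=|$, $R(\sigma\vee\tau)=(|\vee R(\sigma))\vee R(\tau)$. Boxed convolutions (for $n\ge1$): $(f\boxtimes g)_n(x_1,\dots,x_n)=\sum_{\tau\in Y_n}(f\cup g)_{R(\tau)}(x_1,1,x_2,1,\dots,x_n,1)$, $(f\boxtimes g)_0=g_0$; $(f\underline\boxtimes g)_n(x_1,\dots,x_n)=\sum_{\tau\in Y_n}(f\cup g)_{R(\tau)}(1,x_1,1,x_2,\dots,1,x_n)$, $(f\underline\boxtimes g)_0=g_0$; $(f\boxtimes_1 g)_n(x_1,\dots,x_n)=\sum_{\tau\in Y_{n-1}}(g\cup f)_{|\vee R(\tau)}(x_1,1,x_2,1,\dots,1,x_n)$, $(f\boxtimes_1 g)_0=0$; $(f\boxtimes_2 g)_n(x_1,\dots,x_n)=\sum_{\tau\in Y_n}(f\cup g)_{|\vee R(\tau)}(1,x_1,1,x_2,\dots,1,x_n,1)$, $(f\boxtimes_2 g)_0=g_1(1)$. *)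

theory Defs
  imports Main
begin

text \<open>Elements of Mult[[B]] are represented as f :: nat => 'b list => 'b, where f n is the
  n-ary component, applied to argument lists of length n (values on other lengths are irrelevant).\<close>

type_synonym 'b mult = "nat \<Rightarrow> 'b list \<Rightarrow> 'b"

definition is_algebra :: "('k::field_char_0 \<Rightarrow> 'b::ring_1 \<Rightarrow> 'b) \<Rightarrow> bool" where
  "is_algebra scal \<longleftrightarrow>
     (\<forall>a b x. scal a (scal b x) = scal (a * b) x) \<and> (\<forall>x. scal 1 x = x) \<and>
     (\<forall>a b x. scal (a + b) x = scal a x + scal b x) \<and>
     (\<forall>a x y. scal a (x + y) = scal a x + scal a y) \<and>
     (\<forall>a x y. scal a (x * y) = scal a x * y) \<and>
     (\<forall>a x y. scal a (x * y) = x * scal a y)"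

definition multilinear :: "('k \<Rightarrow> 'b::ring_1 \<Rightarrow> 'b) \<Rightarrow> nat \<Rightarrow> ('b list \<Rightarrow> 'b) \<Rightarrow> bool" where
  "multilinear scal n h \<longleftrightarrow>
     (\<forall>xs ys y z. length xs + length ys + 1 = n \<longrightarrow>
        h (xs @ (y + z) # ys) = h (xs @ y # ys) + h (xs @ z # ys)) \<and>
     (\<forall>xs ys a y. length xs + length ys + 1 = n \<longrightarrow>
        h (xs @ scal a y # ys) = scal a (h (xs @ y # ys)))"

definition in_Mult :: "('k \<Rightarrow> 'b::ring_1 \<Rightarrow> 'b) \<Rightarrow> 'b mult \<Rightarrow> bool" where
  "in_Mult scal f \<longleftrightarrow> (\<forall>n. multilinear scal n (f n))"

definition mprod :: "'b::ring_1 mult \<Rightarrow> 'b mult \<Rightarrow> 'b mult" where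
  "mprod f g n xs = (\<Sum>k=0..n. f k (take k xs) * g (n - k) (drop k xs))"

fun blocks :: "nat list \<Rightarrow> 'a list \<Rightarrow> 'a list list" where
  "blocks [] xs = []"
| "blocks (k # ks) xs = take k xs # blocks ks (drop k xs)"

definition compositions :: "nat \<Rightarrow> nat list set" where
  "compositions n = {ks. (\<forall>k\<in>set ks. 1 \<le> k) \<and> sum_list ks = n}"

text \<open>Composition f o g (intended for g 0 = 0): sum over compositions k_1+...+k_l = n, k_i >= 1.\<close>
definition mcomp :: "'b::ring_1 mult \<Rightarrow> 'b mult \<Rightarrow> 'b mult" where
  "mcomp f g n xs = (\<Sum>ks\<in>compositions n.
      f (length ks) (map (\<lambda>(k, ys). g k ys) (zip ks (blocks ks xs))))"

definition mI :: "'b::ring_1 mult" where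
  "mI n xs = (if n = 1 then hd xs else 0)"

datatype ptree = Leaf | Node ptree ptree

fun nnodes :: "ptree \<Rightarrow> nat" where
  "nnodes Leaf = 0"
| "nnodes (Node l r) = Suc (nnodes l + nnodes r)"

definition Y :: "nat \<Rightarrow> ptree set" where
  "Y n = {t. nnodes t = n}"

fun spine :: "ptree \<Rightarrow> ptree list" where
  "spine Leaf = []"
| "spine (Node l r) = l # spine r"

fun Rt :: "ptree \<Rightarrow> ptree" where
  "Rt Leaf = Leaf"
| "Rt (Node s t) = Node (Node Leaf (Rt s)) (Rt t)"

text \<open>(f cup g)_tau. For tau = tau_1 v (tau_2 v ... (tau_k v |)), cupargs produces the list
  [(g cup f)_{tau_1}(x_1..x_{j_1-1}) x_{j_1}, ..., (g cup f)_{tau_k}(...) x_{j_k}].\<close>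
fun cup :: "'b::ring_1 mult \<Rightarrow> 'b mult \<Rightarrow> ptree \<Rightarrow> 'b list \<Rightarrow> 'b"
and cupargs :: "'b::ring_1 mult \<Rightarrow> 'b mult \<Rightarrow> ptree \<Rightarrow> 'b list \<Rightarrow> 'b list" where
  "cup f g Leaf xs = 1"
| "cup f g (Node l r) xs =
     g (length (spine (Node l r)))
       ((cup g f l (take (nnodes l) xs) * xs ! nnodes l) # cupargs f g r (drop (Suc (nnodes l)) xs))"
| "cupargs f g Leaf xs = []"
| "cupargs f g (Node l r) xs =
     (cup g f l (take (nnodes l) xs) * xs ! nnodes l) # cupargs f g r (drop (Suc (nnodes l)) xs)"

definition inter_r :: "'b::ring_1 list \<Rightarrow> 'b list" where
  "inter_r xs = concat (map (\<lambda>x. [x, 1]) xs)"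

definition inter_l :: "'b::ring_1 list \<Rightarrow> 'b list" where
  "inter_l xs = concat (map (\<lambda>x. [1, x]) xs)"

definition boxtimes :: "'b::ring_1 mult \<Rightarrow> 'b mult \<Rightarrow> 'b mult" where
  "boxtimes f g n xs = (if n = 0 then g 0 []
     else (\<Sum>\<tau>\<in>Y n. cup f g (Rt \<tau>) (inter_r xs)))"

definition boxtimes_u :: "'b::ring_1 mult \<Rightarrow> 'b mult \<Rightarrow> 'b mult" where
  "boxtimes_u f g n xs = (if n = 0 then g 0 []
     else (\<Sum>\<tau>\<in>Y n. cup f g (Rt \<tau>) (inter_l xs)))"

definition boxtimes1 :: "'b::ring_1 mult \<Rightarrow> 'b mult \<Rightarrow> 'b mult" where
  "boxtimes1 f g n xs = (if n = 0 then 0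
     else (\<Sum>\<tau>\<in>Y (n - 1). cup g f (Node Leaf (Rt \<tau>)) (butlast (inter_r xs))))"

definition boxtimes2 :: "'b::ring_1 mult \<Rightarrow> 'b mult \<Rightarrow> 'b mult" where
  "boxtimes2 f g n xs = (if n = 0 then g 1 [1]
     else (\<Sum>\<tau>\<in>Y n. cup f g (Node Leaf (Rt \<tau>)) (inter_l xs @ [1])))"

end

(*
  A tree t = t_1 v (t_2 v (... v (t_k v |))) is determined by its right spine (t_1, ..., t_k), and
  R(t) has the spine (| v R(t_1), ..., | v R(t_k)).  So (f cup g)_{R(t)} is g_k applied to one
  argument per spine subtree, and after interleaving with units the i-th argument only involves
  the i-th block of |t_i| + 1 consecutive inputs: for (x_1, 1, x_2, 1, ...) it is the t_i-summand
  of (f boxtimes_1 g) on that block, for (1, x_1, 1, x_2, ...) it is the t_i-summand of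
  (f boxtimes_2 g) on the block without its last input, times that input.  Summing over t in Y_n
  is summing over compositions k_1 + ... + k_l = n and independent choices t_i in Y_{k_i - 1},
  which additivity of g (resp. f) in each argument turns into the composition.
*)

theory Submission
  imports Defs
begin

section \<open>Trees through their right spine\<close>

fun spine_tree :: "ptree list \<Rightarrow> ptree" where
  "spine_tree [] = Leaf"
| "spine_tree (l # ls) = Node l (spine_tree ls)"

lemma spine_tree_spine [simp]: "spine_tree (spine t) = t"
  by (induction t) auto

lemma spine_spine_tree [simp]: "spine (spine_tree ls) = ls"
  by (induction ls) auto

lemma inj_spine: "inj spine"
  by (metis injI spine_tree_spine)

lemma nnodes_Rt [simp]: "nnodes (Rt t) = 2 * nnodes t"
  by (induction t) auto

lemma length_spine_Rt [simp]: "length (spine (Rt t)) = length (spine t)"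
  by (induction t) auto

definition block_sizes :: "ptree list \<Rightarrow> nat list" where
  "block_sizes ls = map (\<lambda>l. Suc (nnodes l)) ls"

lemma block_sizes_simps [simp]:
  "block_sizes [] = []"
  "block_sizes (l # ls) = Suc (nnodes l) # block_sizes ls"
  by (simp_all add: block_sizes_def)

lemma length_block_sizes [simp]: "length (block_sizes ls) = length ls"
  by (simp add: block_sizes_def)

lemma nnodes_eq_sum_block_sizes: "nnodes t = sum_list (block_sizes (spine t))"
  by (induction t) auto

lemma spine_image_Y: "spine ` Y n = {ls. sum_list (block_sizes ls) = n}"
proof
  show "{ls. sum_list (block_sizes ls) = n} \<subseteq> spine ` Y n"
  proof
    fix ls assume "ls \<in> {ls. sum_list (block_sizes ls) = n}"
    then have "spine_tree ls \<in> Y n"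
      by (simp add: Y_def nnodes_eq_sum_block_sizes[of "spine_tree ls"])
    then show "ls \<in> spine ` Y n"
      by (metis image_eqI spine_spine_tree)
  qed
qed (auto simp: Y_def nnodes_eq_sum_block_sizes)

lemma Y_0: "Y 0 = {Leaf}"
  by (auto simp: Y_def elim: nnodes.elims)

lemma finite_Y: "finite (Y n)"
proof (induction n rule: less_induct)
  case (less n)
  let ?smaller = "\<Union>i<n. Y i"
  have "Y n \<subseteq> insert Leaf (case_prod Node ` (?smaller \<times> ?smaller))"
  proof
    fix t assume "t \<in> Y n"
    then show "t \<in> insert Leaf (case_prod Node ` (?smaller \<times> ?smaller))"
      by (cases t) (auto simp: Y_def)
  qed
  moreover have "finite ?smaller"
    using less by blast
  ultimately show ?case
    by (meson finite_SigmaI finite_imageI finite_insert finite_subset)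
qed

lemma compositions_0: "compositions 0 = {[]}"
proof -
  have "ks = []" if "ks \<in> compositions 0" for ks
    using that by (cases ks) (auto simp: compositions_def)
  then show ?thesis
    by (auto simp: compositions_def)
qed

lemma finite_compositions: "finite (compositions n)"
proof -
  have "length ks \<le> sum_list ks" if "\<forall>k\<in>set ks. 1 \<le> k" for ks :: "nat list"
    using that by (induction ks) auto
  then have "compositions n \<subseteq> {ks. set ks \<subseteq> {0..n} \<and> length ks \<le> n}"
    by (fastforce simp: compositions_def dest: member_le_sum_list)
  then show ?thesis
    by (rule finite_subset) (rule finite_lists_length_le, simp)
qed

lemma length_blocks [simp]: "length (blocks ks xs) = length ks"
  by (induction ks arbitrary: xs) auto

lemma length_mem_blocks:
  assumes "sum_list ks = length xs" and "(k, ys) \<in> set (zip ks (blocks ks xs))"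
  shows "length ys = k"
  using assms
proof (induction ks arbitrary: xs)
  case (Cons a ks)
  then show ?case
    by (cases "(k, ys) = (a, take a xs)") (auto simp: Cons.IH[of "drop a xs"])
qed simp

section \<open>Expanding a slotwise additive map over sums\<close>

definition slotwise_additive :: "nat \<Rightarrow> ('a::plus list \<Rightarrow> 'c::plus) \<Rightarrow> bool" where
  "slotwise_additive m h \<longleftrightarrow>
     (\<forall>pre post y z. length pre + length post + 1 = m \<longrightarrow>
        h (pre @ (y + z) # post) = h (pre @ y # post) + h (pre @ z # post))"

lemma multilinear_imp_slotwise_additive:
  "multilinear scal m h \<Longrightarrow> slotwise_additive m h"
  by (simp add: multilinear_def slotwise_additive_def)

lemma slotwise_additive_sum:
  fixes h :: "'a::comm_monoid_add list \<Rightarrow> 'c::cancel_comm_monoid_add"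
  assumes "slotwise_additive m h" and "length pre + length post + 1 = m" and "finite A"
  shows "h (pre @ (\<Sum>a\<in>A. F a) # post) = (\<Sum>a\<in>A. h (pre @ F a # post))"
  using \<open>finite A\<close>
proof (induction A rule: finite_induct)
  case empty
  have "h (pre @ 0 # post) = h (pre @ 0 # post) + h (pre @ 0 # post)"
    using assms(1,2) unfolding slotwise_additive_def by (metis add_0)
  then show ?case
    by simp
next
  case (insert x A)
  then show ?case
    using assms(1,2) by (simp add: slotwise_additive_def)
qed

lemma mem_listset_iff: "xs \<in> listset As \<longleftrightarrow> list_all2 (\<lambda>x A. x \<in> A) xs As"
  by (induction As arbitrary: xs) (auto simp: set_Cons_def list_all2_Cons2)

lemma sum_set_Cons:
  assumes "finite A" and "finite XS"
  shows "(\<Sum>xs\<in>set_Cons A XS. F xs) = (\<Sum>a\<in>A. \<Sum>xs\<in>XS. F (a # xs))"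
proof -
  have "set_Cons A XS = case_prod Cons ` (A \<times> XS)"
    by (auto simp: set_Cons_def)
  moreover have "inj_on (case_prod Cons) (A \<times> XS)"
    by (auto intro: inj_onI)
  ultimately show ?thesis
    using assms by (simp add: sum.reindex sum.cartesian_product case_prod_beta')
qed

lemma finite_listset: "\<forall>A\<in>set As. finite A \<Longrightarrow> finite (listset As)"
proof (induction As)
  case (Cons A As)
  have "set_Cons A (listset As) = case_prod Cons ` (A \<times> listset As)"
    by (auto simp: set_Cons_def)
  with Cons show ?case
    by simp
qed simp

lemma slotwise_additive_sum_list:
  fixes h :: "'a::comm_monoid_add list \<Rightarrow> 'c::cancel_comm_monoid_add"
  assumes "slotwise_additive m h" and "\<forall>j\<in>set js. finite (A j)"
    and "length pre + length js = m"
  shows "h (pre @ map (\<lambda>j. \<Sum>a\<in>A j. F j a) js) =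
         (\<Sum>as\<in>listset (map A js). h (pre @ map2 F js as))"
  using assms(2,3)
proof (induction js arbitrary: pre)
  case (Cons j js)
  have "h (pre @ (\<Sum>a\<in>A j. F j a) # map (\<lambda>j. \<Sum>a\<in>A j. F j a) js) =
        (\<Sum>a\<in>A j. h (pre @ F j a # map (\<lambda>j. \<Sum>a\<in>A j. F j a) js))"
    by (rule slotwise_additive_sum[OF assms(1)]) (use Cons.prems in auto)
  then have "h (pre @ map (\<lambda>j. \<Sum>a\<in>A j. F j a) (j # js)) =
        (\<Sum>a\<in>A j. h ((pre @ [F j a]) @ map (\<lambda>j. \<Sum>a\<in>A j. F j a) js))"
    by simp
  also have "\<dots> = (\<Sum>a\<in>A j. \<Sum>as\<in>listset (map A js). h ((pre @ [F j a]) @ map2 F js as))"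
  proof (rule sum.cong[OF refl])
    fix a
    show "h ((pre @ [F j a]) @ map (\<lambda>j. \<Sum>a\<in>A j. F j a) js) =
          (\<Sum>as\<in>listset (map A js). h ((pre @ [F j a]) @ map2 F js as))"
      using Cons.IH[of "pre @ [F j a]"] Cons.prems by simp
  qed
  also have "\<dots> = (\<Sum>as\<in>listset (map A (j # js)). h (pre @ map2 F (j # js) as))"
    using Cons.prems by (simp add: sum_set_Cons finite_listset)
  finally show ?case .
qed simp

section \<open>Sums over trees as sums over compositions\<close>

lemma mem_listset_Y_iff:
  assumes "\<forall>k\<in>set ks. 1 \<le> k"
  shows "ls \<in> listset (map (\<lambda>k. Y (k - 1)) ks) \<longleftrightarrow> block_sizes ls = ks"
  unfolding mem_listset_iff using assms
proof (induction ks arbitrary: ls)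
  case (Cons k ks)
  then show ?case
    by (cases ls) (auto simp: Y_def)
qed (simp add: block_sizes_def)

lemma sum_Y_by_compositions:
  "(\<Sum>\<tau>\<in>Y n. P \<tau>) =
   (\<Sum>ks\<in>compositions n. \<Sum>ls\<in>listset (map (\<lambda>k. Y (k - 1)) ks). P (spine_tree ls))"
proof -
  have fibre: "{ls \<in> spine ` Y n. block_sizes ls = ks} = listset (map (\<lambda>k. Y (k - 1)) ks)"
    if "ks \<in> compositions n" for ks
    using that mem_listset_Y_iff[of ks] by (auto simp: spine_image_Y compositions_def)
  have "(\<Sum>\<tau>\<in>Y n. P \<tau>) = (\<Sum>ls\<in>spine ` Y n. P (spine_tree ls))"
    by (simp add: sum.reindex inj_on_subset[OF inj_spine])
  also have "\<dots> = (\<Sum>ks\<in>compositions n. \<Sum>ls\<in>{ls \<in> spine ` Y n. block_sizes ls = ks}. P (spine_tree ls))"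
    by (rule sum.group[symmetric, OF finite_imageI[OF finite_Y] finite_compositions])
      (auto simp: spine_image_Y compositions_def block_sizes_def)
  also have "\<dots> = (\<Sum>ks\<in>compositions n. \<Sum>ls\<in>listset (map (\<lambda>k. Y (k - 1)) ks). P (spine_tree ls))"
    by (rule sum.cong[OF refl]) (simp add: fibre)
  finally show ?thesis .
qed

lemma sum_Y_eq_mcomp:
  fixes h G :: "'b::ring_1 mult" and F :: "nat \<times> 'b list \<Rightarrow> ptree \<Rightarrow> 'b"
  assumes additive: "\<And>m. slotwise_additive m (h m)"
    and length_xs: "length xs = n"
    and tree: "\<And>ls. sum_list (block_sizes ls) = n \<Longrightarrow>
      P (spine_tree ls) = h (length ls) (map2 F (zip (block_sizes ls) (blocks (block_sizes ls) xs)) ls)"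
    and block: "\<And>k ys. 1 \<le> k \<Longrightarrow> length ys = k \<Longrightarrow> G k ys = (\<Sum>\<tau>\<in>Y (k - 1). F (k, ys) \<tau>)"
  shows "(\<Sum>\<tau>\<in>Y n. P \<tau>) = mcomp h G n xs"
proof -
  let ?choices = "\<lambda>ks. listset (map (\<lambda>k. Y (k - 1)) ks)"
  have "(\<Sum>\<tau>\<in>Y n. P \<tau>) = (\<Sum>ks\<in>compositions n. \<Sum>ls\<in>?choices ks. P (spine_tree ls))"
    by (rule sum_Y_by_compositions)
  also have "\<dots> = (\<Sum>ks\<in>compositions n. \<Sum>ls\<in>?choices ks.
      h (length ks) (map2 F (zip ks (blocks ks xs)) ls))"
  proof (intro sum.cong refl)
    fix ks ls assume "ks \<in> compositions n" and "ls \<in> ?choices ks"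
    then have "block_sizes ls = ks" and "sum_list ks = n"
      using mem_listset_Y_iff by (auto simp: compositions_def)
    then show "P (spine_tree ls) = h (length ks) (map2 F (zip ks (blocks ks xs)) ls)"
      using tree by force
  qed
  also have "\<dots> = (\<Sum>ks\<in>compositions n.
      h (length ks) (map (\<lambda>p. \<Sum>\<tau>\<in>Y (fst p - 1). F p \<tau>) (zip ks (blocks ks xs))))"
  proof (rule sum.cong[OF refl])
    fix ks
    have "map (\<lambda>p. Y (fst p - 1)) (zip ks (blocks ks xs)) = map (\<lambda>k. Y (k - 1)) ks"
      by (induction ks arbitrary: xs) auto
    then show "(\<Sum>ls\<in>?choices ks. h (length ks) (map2 F (zip ks (blocks ks xs)) ls)) =
        h (length ks) (map (\<lambda>p. \<Sum>\<tau>\<in>Y (fst p - 1). F p \<tau>) (zip ks (blocks ks xs)))"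
      using slotwise_additive_sum_list[OF additive, where pre = "[]" and A = "\<lambda>p. Y (fst p - 1)"
          and js = "zip ks (blocks ks xs)" and F = F]
      by (simp add: finite_Y)
  qed
  also have "\<dots> = mcomp h G n xs"
    unfolding mcomp_def
  proof (intro sum.cong refl arg_cong[where f = "h _"] map_cong)
    fix ks p assume ks: "ks \<in> compositions n" and p: "p \<in> set (zip ks (blocks ks xs))"
    obtain k ys where p_eq: "p = (k, ys)"
      by fastforce
    have "1 \<le> k"
      using ks p p_eq by (auto simp: compositions_def dest: set_zip_leftD)
    moreover have "length ys = k"
      using ks p p_eq length_xs length_mem_blocks by (auto simp: compositions_def)
    ultimately show "(\<Sum>\<tau>\<in>Y (fst p - 1). F p \<tau>) = (case p of (k, ys) \<Rightarrow> G k ys)"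
      using block p_eq by simp
  qed
  finally show ?thesis .
qed

section \<open>Cup products along the spine of a right-grafted tree\<close>

lemma take_inter_r:
  "j < length xs \<Longrightarrow> take (Suc (2 * j)) (inter_r xs) = butlast (inter_r (take (Suc j) xs))"
  by (induction j arbitrary: xs; case_tac xs) (auto simp: inter_r_def)

lemma nth_inter_r: "j < length xs \<Longrightarrow> inter_r xs ! Suc (2 * j) = 1"
  by (induction j arbitrary: xs; case_tac xs) (auto simp: inter_r_def)

lemma drop_inter_r: "drop (Suc (Suc (2 * j))) (inter_r xs) = inter_r (drop (Suc j) xs)"
  by (induction j arbitrary: xs; case_tac xs) (auto simp: inter_r_def)

lemma take_inter_l: "j < length xs \<Longrightarrow> take (Suc (2 * j)) (inter_l xs) = inter_l (take j xs) @ [1]"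
  by (induction j arbitrary: xs; case_tac xs) (auto simp: inter_l_def)

lemma nth_inter_l: "j < length xs \<Longrightarrow> inter_l xs ! Suc (2 * j) = xs ! j"
  by (induction j arbitrary: xs; case_tac xs) (auto simp: inter_l_def)

lemma drop_inter_l: "drop (Suc (Suc (2 * j))) (inter_l xs) = inter_l (drop (Suc j) xs)"
  by (induction j arbitrary: xs; case_tac xs) (auto simp: inter_l_def)

lemma cup_Rt_spine_tree:
  "ls \<noteq> [] \<Longrightarrow> cup f g (Rt (spine_tree ls)) xs = g (length ls) (cupargs f g (Rt (spine_tree ls)) xs)"
  by (cases ls) auto

lemma cupargs_Rt_inter_r:
  "length xs = sum_list (block_sizes ls) \<Longrightarrow>
   cupargs f g (Rt (spine_tree ls)) (inter_r xs) =
   map2 (\<lambda>(k, ys) \<tau>. cup g f (Node Leaf (Rt \<tau>)) (butlast (inter_r ys)))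
     (zip (block_sizes ls) (blocks (block_sizes ls) xs)) ls"
proof (induction ls arbitrary: xs)
  case (Cons l ls)
  then show ?case
    by (simp add: take_inter_r nth_inter_r drop_inter_r)
qed simp

lemma cupargs_Rt_inter_l:
  "length xs = sum_list (block_sizes ls) \<Longrightarrow>
   cupargs f g (Rt (spine_tree ls)) (inter_l xs) =
   map2 (\<lambda>(k, ys) \<tau>. cup g f (Node Leaf (Rt \<tau>)) (inter_l (take (k - 1) ys) @ [1]) * ys ! (k - 1))
     (zip (block_sizes ls) (blocks (block_sizes ls) xs)) ls"
proof (induction ls arbitrary: xs)
  case (Cons l ls)
  then show ?case
    by (simp add: take_inter_l nth_inter_l drop_inter_l min_def)
qed simp

lemma boxtimes_eq_mcomp:
  assumes "\<And>m. slotwise_additive m (g m)" and "length xs = n"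
  shows "boxtimes f g n xs = mcomp g (boxtimes1 f g) n xs"
proof (cases "n = 0")
  case True
  then show ?thesis
    by (simp add: boxtimes_def mcomp_def compositions_0)
next
  case False
  have "boxtimes f g n xs = (\<Sum>\<tau>\<in>Y n. cup f g (Rt \<tau>) (inter_r xs))"
    using False by (simp add: boxtimes_def)
  also have "\<dots> = mcomp g (boxtimes1 f g) n xs"
  proof (rule sum_Y_eq_mcomp[OF assms,
        where F = "\<lambda>(k, ys) \<tau>. cup g f (Node Leaf (Rt \<tau>)) (butlast (inter_r ys))"])
    fix ls assume sizes: "sum_list (block_sizes ls) = n"
    with False have nonempty: "ls \<noteq> []"
      by auto
    from sizes assms(2) have length_xs: "length xs = sum_list (block_sizes ls)"
      by simp
    show "cup f g (Rt (spine_tree ls)) (inter_r xs) =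
        g (length ls) (map2 (\<lambda>(k, ys) \<tau>. cup g f (Node Leaf (Rt \<tau>)) (butlast (inter_r ys)))
          (zip (block_sizes ls) (blocks (block_sizes ls) xs)) ls)"
      unfolding cup_Rt_spine_tree[OF nonempty] cupargs_Rt_inter_r[OF length_xs] ..
  qed (simp add: boxtimes1_def)
  finally show ?thesis .
qed

lemma mprod_mI:
  assumes "1 \<le> k" and "length ys = k"
  shows "mprod h mI k ys = h (k - 1) (take (k - 1) ys) * ys ! (k - 1)"
proof -
  have "mprod h mI k ys = (\<Sum>j=0..k. if j = k - 1 then h j (take j ys) * hd (drop j ys) else 0)"
    unfolding mprod_def mI_def by (rule sum.cong) (use assms in auto)
  also have "\<dots> = h (k - 1) (take (k - 1) ys) * ys ! (k - 1)"
    using assms by (simp add: hd_drop_conv_nth)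
  finally show ?thesis .
qed

lemma boxtimes2_eq_sum:
  "length ys = k \<Longrightarrow> boxtimes2 f g k ys = (\<Sum>\<tau>\<in>Y k. cup f g (Node Leaf (Rt \<tau>)) (inter_l ys @ [1]))"
  by (cases k) (auto simp: boxtimes2_def Y_0 inter_l_def)

lemma boxtimes_u_eq_mcomp:
  assumes "\<And>m. slotwise_additive m (f m)" and "length xs = n"
  shows "boxtimes_u g f n xs = mcomp f (mprod (boxtimes2 f g) mI) n xs"
proof (cases "n = 0")
  case True
  then show ?thesis
    by (simp add: boxtimes_u_def mcomp_def compositions_0)
next
  case False
  let ?F = "\<lambda>(k, ys) \<tau>. cup f g (Node Leaf (Rt \<tau>)) (inter_l (take (k - 1) ys) @ [1]) * ys ! (k - 1)"
  have "boxtimes_u g f n xs = (\<Sum>\<tau>\<in>Y n. cup g f (Rt \<tau>) (inter_l xs))"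
    using False by (simp add: boxtimes_u_def)
  also have "\<dots> = mcomp f (mprod (boxtimes2 f g) mI) n xs"
  proof (rule sum_Y_eq_mcomp[OF assms, where F = ?F])
    fix ls assume sizes: "sum_list (block_sizes ls) = n"
    with False have nonempty: "ls \<noteq> []"
      by auto
    from sizes assms(2) have length_xs: "length xs = sum_list (block_sizes ls)"
      by simp
    show "cup g f (Rt (spine_tree ls)) (inter_l xs) =
        f (length ls) (map2 ?F (zip (block_sizes ls) (blocks (block_sizes ls) xs)) ls)"
      unfolding cup_Rt_spine_tree[OF nonempty] cupargs_Rt_inter_l[OF length_xs] ..
  next
    fix k and ys :: "'a list" assume "1 \<le> k" and "length ys = k"
    then show "mprod (boxtimes2 f g) mI k ys = (\<Sum>\<tau>\<in>Y (k - 1). ?F (k, ys) \<tau>)"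
      by (simp add: mprod_mI boxtimes2_eq_sum sum_distrib_right)
  qed
  finally show ?thesis .
qed

theorem lemma3:
  fixes scal :: "'k::field_char_0 \<Rightarrow> 'b::ring_1 \<Rightarrow> 'b"
    and f g :: "'b mult"
  assumes "is_algebra scal"
    and "in_Mult scal f"
    and "in_Mult scal g"
  shows "(\<forall>n xs. length xs = n \<longrightarrow>
            boxtimes f g n xs = mcomp g (boxtimes1 f g) n xs) \<and>
         (\<forall>n xs. length xs = n \<longrightarrow>
            boxtimes_u g f n xs = mcomp f (mprod (boxtimes2 f g) mI) n xs)"
proof -
  have "\<And>m. slotwise_additive m (f m)" and "\<And>m. slotwise_additive m (g m)"
    using assms(2,3) by (meson in_Mult_def multilinear_imp_slotwise_additive)+
  then show ?thesis
    using boxtimes_eq_mcomp boxtimes_u_eq_mcomp by blast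
qed

end
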